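(* $$\limsup_{n\to\infty}\bigl(V(n+1)-V(n)\bigr)=+\infty \quad\text{and}\quad \liminf_{n\to\infty}\bigl(V(n+1)-V(n)\bigr)=-\infty.$$
   Context: For a positive integer $n$, an integer $a$ is called regular modulo $n$ if there exists an integer $x$ with $a^2x\equiv a \pmod n$. Let $V(n)$ denote the number of integers $a$ with $1\le a\le n$ that are regular modulo $n$. (Known fact: $V$ is multiplicative, $V(1)=1$, and $V(p^{\alpha})=p^{\alpha}-p^{\alpha-1}+1$ for a prime $p$ and $\alpha\ge1$.) *)

theory Defs
  imports "HOL-Analysis.Analysis" "HOL-Number_Theory.Number_Theory"
begin

definition regular_mod :: "int \<Rightarrow> nat \<Rightarrow> bool" where
  "regular_mod a n \<longleftrightarrow> (\<exists>x::int. [a^2 * x = a] (mod int n))"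

definition V :: "nat \<Rightarrow> nat" where
  "V n = card {a::int. 1 \<le> a \<and> a \<le> int n \<and> regular_mod a n}"

end

theory Submission
  imports Defs "HOL-Real_Asymp.Real_Asymp"
begin

text \<open>Units are regular, so \<open>\<phi>(n) \<le> V(n)\<close>; if \<open>4 dvd n\<close>, no residue \<open>\<equiv> 2 (mod 4)\<close> is regular,
  so \<open>V(n) \<le> 3n/4\<close>. Taking \<open>n + 1 = 5^k\<close> (so \<open>4 dvd n\<close>) makes \<open>V(n+1) - V(n) \<ge> 5^k/20\<close>;
  taking \<open>n = 7^(2k+1)\<close> (so \<open>4 dvd n + 1\<close>) makes \<open>V(n+1) - V(n) \<le> 3(1 - 49^k)/4\<close>.\<close>

lemma finite_regular_mod_set: "finite {a::int. 1 \<le> a \<and> a \<le> int n \<and> regular_mod a n}"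
  by (rule finite_subset[of _ "{1..int n}"]) auto

lemma regular_mod_if_coprime:
  assumes "coprime a (int n)"
  shows "regular_mod a n"
proof -
  obtain x where "[a * x = 1] (mod int n)"
    using cong_solve_coprime_int[OF assms] by blast
  then have "[a * (a * x) = a * 1] (mod int n)"
    by (rule cong_scalar_left)
  then show ?thesis
    unfolding regular_mod_def by (auto simp: power2_eq_square mult.assoc)
qed

lemma totient_le_V: "totient n \<le> V n"
proof -
  have "int ` totatives n \<subseteq> {a. 1 \<le> a \<and> a \<le> int n \<and> regular_mod a n}"
    by (auto simp: totatives_def intro!: regular_mod_if_coprime)
  then have "card (int ` totatives n) \<le> V n"
    unfolding V_def by (rule card_mono[OF finite_regular_mod_set])
  then show ?thesis
    by (simp add: totient_def card_image)
qed

lemma not_regular_mod_if_mod_4_eq_2: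
  assumes "4 dvd n" and "a mod 4 = 2"
  shows "\<not> regular_mod a n"
proof
  assume "regular_mod a n"
  then obtain x where "[a^2 * x = a] (mod int n)"
    unfolding regular_mod_def by blast
  then have "[a^2 * x = a] (mod 4)"
    by (rule cong_dvd_modulus) (use assms(1) in presburger)
  moreover have "4 dvd a^2 * x"
  proof -
    have "2 dvd a" using assms(2) by presburger
    then show ?thesis by (auto simp: power2_eq_square mult_dvd_mono)
  qed
  ultimately have "4 dvd a"
    by (simp add: cong_dvd_iff)
  with assms(2) show False by presburger
qed

lemma V_le_if_4_dvd:
  assumes "4 dvd n"
  shows "4 * V n \<le> 3 * n"
proof -
  define B where "B = (\<lambda>j. 4 * int j + 2) ` {..<n div 4}"
  have card_B: "card B = n div 4"
    unfolding B_def by (subst card_image) (auto simp: inj_on_def)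
  have B_sub: "B \<subseteq> {1..int n}"
    unfolding B_def using assms by auto
  have "{a. 1 \<le> a \<and> a \<le> int n \<and> regular_mod a n} \<subseteq> {1..int n} - B"
    using not_regular_mod_if_mod_4_eq_2[OF assms] unfolding B_def by fastforce
  then have "V n \<le> card ({1..int n} - B)"
    unfolding V_def by (intro card_mono) auto
  also have "\<dots> = n - n div 4"
    using B_sub card_B by (simp add: card_Diff_subset finite_subset)
  finally show ?thesis
    using assms by auto
qed

lemma V_prime_power_ge:
  assumes "prime p"
  shows "p ^ k * (p - 1) \<le> V (p ^ Suc k)"
  using totient_le_V[of "p ^ Suc k"] by (simp only: totient_prime_power_Suc[OF assms])

lemma V_jump_at_power_of_5:
  "real (5 ^ Suc k) / 20 \<le> real (V (5 ^ Suc k)) - real (V (5 ^ Suc k - 1))"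
proof -
  have "[5 ^ Suc k = 1 ^ Suc k] (mod 4::nat)"
    by (rule cong_pow) (simp add: cong_def)
  then have "4 dvd 5 ^ Suc k - (1::nat)"
    by (simp add: cong_altdef_nat)
  then have "real (4 * V (5 ^ Suc k - 1)) \<le> real (3 * (5 ^ Suc k - 1))"
    by (simp only: of_nat_le_iff V_le_if_4_dvd)
  then have upper: "4 * real (V (5 ^ Suc k - 1)) \<le> 3 * (real (5 ^ Suc k) - 1)"
    by simp
  have "prime (5::nat)"
    by simp
  then have "real (5 ^ k * (5 - 1)) \<le> real (V (5 ^ Suc k))"
    by (simp only: of_nat_le_iff V_prime_power_ge)
  then have lower: "4 * 5 ^ k \<le> real (V (5 ^ Suc k))"
    by simp
  show ?thesis
    using upper lower by simp
qed

lemma V_jump_at_odd_power_of_7: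
  "real (V (7 ^ (2 * k + 1) + 1)) - real (V (7 ^ (2 * k + 1))) \<le> 3 * (1 - 49 ^ k) / 4"
proof -
  have seven_pow: "(7::nat) ^ (2 * k + 1) = 7 * 49 ^ k"
    by (simp add: power_mult)
  have "[49 ^ k = 1 ^ k] (mod 4::nat)"
    by (rule cong_pow) (simp add: cong_def)
  then have "(49::nat) ^ k mod 4 = 1"
    by (simp add: cong_def)
  then have "4 dvd 7 * 49 ^ k + (1::nat)"
    by presburger
  then have "real (4 * V (7 * 49 ^ k + 1)) \<le> real (3 * (7 * 49 ^ k + 1))"
    by (simp only: of_nat_le_iff V_le_if_4_dvd)
  then have upper: "4 * real (V (7 * 49 ^ k + 1)) \<le> 3 * (7 * 49 ^ k + 1)"
    by simp
  have "prime (7::nat)"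
    by simp
  then have "real (7 ^ (2 * k) * (7 - 1)) \<le> real (V (7 ^ Suc (2 * k)))"
    by (simp only: of_nat_le_iff V_prime_power_ge)
  then have lower: "6 * 49 ^ k \<le> real (V (7 * 49 ^ k))"
    by (simp add: power_mult)
  show ?thesis
    unfolding seven_pow using upper lower by simp
qed

lemma limsup_eq_infinity_if_subseq_at_top:
  fixes f :: "nat \<Rightarrow> real"
  assumes "strict_mono r" and "filterlim (f \<circ> r) at_top sequentially"
  shows "limsup (\<lambda>n. ereal (f n)) = \<infinity>"
proof -
  have "((\<lambda>k. ereal (f (r k))) \<longlongrightarrow> \<infinity>) sequentially"
    using assms(2) by (simp add: tendsto_PInfty_eq_at_top comp_def)
  then have "limsup ((\<lambda>n. ereal (f n)) \<circ> r) = \<infinity>"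
    by (simp add: comp_def lim_imp_Limsup)
  then have "\<infinity> \<le> limsup (\<lambda>n. ereal (f n))"
    using limsup_subseq_mono[OF assms(1)] by metis
  then show ?thesis
    by simp
qed

lemma liminf_eq_minus_infinity_if_subseq_at_bot:
  fixes f :: "nat \<Rightarrow> real"
  assumes "strict_mono r" and "filterlim (f \<circ> r) at_bot sequentially"
  shows "liminf (\<lambda>n. ereal (f n)) = - \<infinity>"
proof -
  have "((\<lambda>k. ereal (f (r k))) \<longlongrightarrow> - \<infinity>) sequentially"
    using assms(2) unfolding tendsto_MInfty filterlim_at_bot_dense by (simp add: comp_def)
  then have "liminf ((\<lambda>n. ereal (f n)) \<circ> r) = - \<infinity>"
    by (simp add: comp_def lim_imp_Liminf)
  then have "liminf (\<lambda>n. ereal (f n)) \<le> - \<infinity>"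
    using liminf_subseq_mono[OF assms(1)] by metis
  then show ?thesis
    by simp
qed

theorem proposition3:
  shows "limsup (\<lambda>n. ereal (real (V (n + 1)) - real (V n))) = \<infinity> \<and>
         liminf (\<lambda>n. ereal (real (V (n + 1)) - real (V n))) = - \<infinity>"
proof
  define D where "D n = real (V (n + 1)) - real (V n)" for n
  have "strict_mono (\<lambda>k. 5 ^ Suc k - 1 :: nat)"
    by (rule strict_monoI) (simp add: diff_less_mono)
  moreover have "filterlim (D \<circ> (\<lambda>k. 5 ^ Suc k - 1)) at_top sequentially"
  proof (rule filterlim_at_top_mono)
    show "filterlim (\<lambda>k. real (5 ^ Suc k) / 20) at_top sequentially"
      by real_asymp
    show "\<forall>\<^sub>F k in sequentially. real (5 ^ Suc k) / 20 \<le> (D \<circ> (\<lambda>k. 5 ^ Suc k - 1)) k"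
      using V_jump_at_power_of_5 by (simp add: D_def)
  qed
  ultimately show "limsup (\<lambda>n. ereal (real (V (n + 1)) - real (V n))) = \<infinity>"
    using limsup_eq_infinity_if_subseq_at_top unfolding D_def by blast
  have "strict_mono (\<lambda>k. 7 ^ (2 * k + 1) :: nat)"
    by (rule strict_monoI) simp
  moreover have "filterlim (D \<circ> (\<lambda>k. 7 ^ (2 * k + 1))) at_bot sequentially"
  proof (rule filterlim_at_bot_mono)
    show "filterlim (\<lambda>k. 3 * (1 - 49 ^ k) / 4 :: real) at_bot sequentially"
      by real_asymp
    show "\<forall>\<^sub>F k in sequentially. (D \<circ> (\<lambda>k. 7 ^ (2 * k + 1))) k \<le> 3 * (1 - 49 ^ k) / 4"
      using V_jump_at_odd_power_of_7 by (simp add: D_def)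
  qed
  ultimately show "liminf (\<lambda>n. ereal (real (V (n + 1)) - real (V n))) = - \<infinity>"
    using liminf_eq_minus_infinity_if_subseq_at_bot unfolding D_def by blast
qed

end
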